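(* There exist finite alphabets $\Sigma,\Gamma$, a function $f:\Sigma^*\to\Gamma^*$, integers $i,j>0$ and a tier $\tau$ on $\Sigma\cup\Gamma$ such that $f$ is $i,j$-TIOSL on tier $\tau$, but for every $k>0$ and every tier $\upsilon$ on $\Sigma\times\Gamma^*$, $f$ is not $k$-TSSL on tier $\upsilon$.
   Context: Strings: $\lambda$ is the empty string; $\rtimes$ is a boundary symbol not in any alphabet. For $m\ge0$, $\mathrm{suff}^m(x)$ is the string of the last $m$ symbols of $\rtimes^mx$. $\mathrm{lcp}(A)$ is the longest common prefix of a set of strings $A$. For $f:\Sigma^*\to\Gamma^*$: $f^{\gets}(x):=\mathrm{lcp}(\{f(xy)\mid y\in\Sigma^*\})$, and $f^{\to}_x$ is defined by $f(xy)=f^{\gets}(x)f^{\to}_x(y)$. A tier on a (possibly infinite) alphabet $A$ is a homomorphism $\tau:A^*\to A^*$ with $\tau(a)\in\{a,\lambda\}$ for each $a\in A$. Given $i,j>0$ and a tier $\tau$ on $\Sigma\cup\Gamma$, $f$ is $i,j$-TIOSL on $\tau$ if for all $w,x\in\Sigma^*$, $\mathrm{suff}^{i-1}(\tau(w))=\mathrm{suff}^{i-1}(\tau(x))$ and $\mathrm{suff}^{j-1}(\tau(f^{\gets}(w)))=\mathrm{suff}^{j-1}(\tau(f^{\gets}(x)))$ imply $f^{\to}_w=f^{\to}_x$. Actions of $f$: $\mathbb{A}_f:=\{\langle x,y\rangle\in\Sigma\times\Gamma^*\mid\exists z\in\Sigma^*.\ f^{\gets}(zx)=f^{\gets}(z)y\}$,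 written $x:y$. The run $f^{\Leftarrow}(x)$: if $|x|\le1$, $f^{\Leftarrow}(x):=x:f^{\gets}(x)$; if $x=yz$ with $|y|\ge1$, $|z|=1$, then $f^{\Leftarrow}(x):=f^{\Leftarrow}(y)(z:w)$ where $f^{\gets}(x)=f^{\gets}(y)w$. For a tier $\upsilon$ on $\Sigma\times\Gamma^*$ and $k>0$, $f$ is $k$-TSSL on $\upsilon$ if for all $x,y\in\Sigma^*$, $\mathrm{suff}^{k-1}(\upsilon(f^{\Leftarrow}(x)))=\mathrm{suff}^{k-1}(\upsilon(f^{\Leftarrow}(y)))$ implies $f^{\to}_x=f^{\to}_y$. *)

theory Defs
  imports Main "HOL-Library.Sublist"
begin

(* Strings are lists. The boundary symbol is None in 'a option (not in any alphabet). *)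

definition suff :: "nat \<Rightarrow> 'a list \<Rightarrow> 'a option list" where
  "suff m x = drop (length x) (replicate m None @ map Some x)"

definition lcp :: "'a list set \<Rightarrow> 'a list" where
  "lcp A = (THE p. (\<forall>a\<in>A. prefix p a) \<and> (\<forall>q. (\<forall>a\<in>A. prefix q a) \<longrightarrow> prefix q p))"

definition fl :: "'a set \<Rightarrow> ('a list \<Rightarrow> 'b list) \<Rightarrow> 'a list \<Rightarrow> 'b list" where
  "fl Sig f x = lcp {f (x @ y) | y. y \<in> lists Sig}"

(* f^{->}_x(y), defined by f(xy) = f^{<-}(x) f^{->}_x(y) *)
definition fr :: "'a set \<Rightarrow> ('a list \<Rightarrow> 'b list) \<Rightarrow> 'a list \<Rightarrow> 'a list \<Rightarrow> 'b list" where
  "fr Sig f x y = drop (length (fl Sig f x)) (f (x @ y))"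

definition is_tier :: "'a set \<Rightarrow> ('a list \<Rightarrow> 'a list) \<Rightarrow> bool" where
  "is_tier A tau \<longleftrightarrow> tau [] = [] \<and>
     (\<forall>u\<in>lists A. \<forall>v\<in>lists A. tau (u @ v) = tau u @ tau v) \<and>
     (\<forall>a\<in>A. tau [a] = [a] \<or> tau [a] = [])"

definition TIOSL :: "'a set \<Rightarrow> ('a list \<Rightarrow> 'a list) \<Rightarrow> nat \<Rightarrow> nat \<Rightarrow> ('a list \<Rightarrow> 'a list) \<Rightarrow> bool" where
  "TIOSL Sig f i j tau \<longleftrightarrow>
     (\<forall>w\<in>lists Sig. \<forall>x\<in>lists Sig.
        suff (i - 1) (tau w) = suff (i - 1) (tau x) \<and>
        suff (j - 1) (tau (fl Sig f w)) = suff (j - 1) (tau (fl Sig f x))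
        \<longrightarrow> (\<forall>y\<in>lists Sig. fr Sig f w y = fr Sig f x y))"

definition actions :: "'a set \<Rightarrow> ('a list \<Rightarrow> 'b list) \<Rightarrow> ('a \<times> 'b list) set" where
  "actions Sig f = {(x, y). x \<in> Sig \<and> (\<exists>z\<in>lists Sig. fl Sig f (z @ [x]) = fl Sig f z @ y)}"

(* Runs. An action x:w with x in Sig is (Some x, w); the pair lambda:f^{<-}(lambda)
   (only occurring as the run of the empty string) is (None, f^{<-}(lambda)).
   run_rev works on the reversed input. *)
primrec run_rev :: "'a set \<Rightarrow> ('a list \<Rightarrow> 'b list) \<Rightarrow> 'a list \<Rightarrow> ('a option \<times> 'b list) list" where
  "run_rev Sig f [] = [(None, fl Sig f [])]"
| "run_rev Sig f (z # ry) =
     (if ry = [] then [(Some z, fl Sig f [z])]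
      else run_rev Sig f ry @ [(Some z, drop (length (fl Sig f (rev ry))) (fl Sig f (rev ry @ [z])))])"

definition run :: "'a set \<Rightarrow> ('a list \<Rightarrow> 'b list) \<Rightarrow> 'a list \<Rightarrow> ('a option \<times> 'b list) list" where
  "run Sig f x = run_rev Sig f (rev x)"

definition run_alphabet :: "'a set \<Rightarrow> 'b set \<Rightarrow> ('a option \<times> 'b list) set" where
  "run_alphabet Sig Gam = {(a, w). (a = None \<or> the a \<in> Sig) \<and> w \<in> lists Gam}"

definition TSSL :: "'a set \<Rightarrow> ('a list \<Rightarrow> 'b list) \<Rightarrow> nat
     \<Rightarrow> (('a option \<times> 'b list) list \<Rightarrow> ('a option \<times> 'b list) list) \<Rightarrow> bool" where
  "TSSL Sig f k ups \<longleftrightarrow>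
     (\<forall>x\<in>lists Sig. \<forall>y\<in>lists Sig.
        suff (k - 1) (ups (run Sig f x)) = suff (k - 1) (ups (run Sig f y))
        \<longrightarrow> (\<forall>z\<in>lists Sig. fr Sig f x z = fr Sig f y z))"

end

theory Submission
  imports Defs
begin

text \<open>The witness \<open>f\<close> writes the image of its input under the homomorphism
  \<open>0 \<mapsto> \<lambda>, 1 \<mapsto> 3, 2 \<mapsto> 4\<close> and, at the end of the input, appends a record of whether
  a \<open>0\<close> has occurred and of the last symbol written so far. Hence \<open>f\<^sup>\<leftarrow>\<close> is that
  homomorphic image, and both pieces of information are visible through windows of width one
  on the tier \<open>{0, 3, 4}\<close>. A run of \<open>f\<close>, however, consists of the actions \<open>0:\<lambda>\<close>, \<open>1:3\<close>,
  \<open>2:4\<close>. A tier on actions that keeps \<open>1:3\<close> loses a leading \<open>0\<close> behind a long block of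
  \<open>1\<close>s; a tier that erases \<open>1:3\<close> cannot tell \<open>21\<close> from \<open>2\<close>.\<close>

lemma longest_common_prefix_append_Cons:
  "b \<noteq> c \<Longrightarrow> longest_common_prefix (p @ b # s) (p @ c # t) = p"
  by (induction p) auto

lemma lcp_eqI:
  assumes common: "\<forall>x\<in>A. prefix p x"
    and "p @ b # s \<in> A" "p @ c # t \<in> A" "b \<noteq> c"
  shows "lcp A = p"
  unfolding lcp_def
proof (rule the_equality)
  have longest: "prefix q p" if "\<forall>x\<in>A. prefix q x" for q
    using longest_common_prefix_max_prefix[of q "p @ b # s" "p @ c # t"] that assms(2-4)
    by (simp add: longest_common_prefix_append_Cons)
  then show "(\<forall>x\<in>A. prefix p x) \<and> (\<forall>q. (\<forall>x\<in>A. prefix q x) \<longrightarrow> prefix q p)"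
    using common by blast
  show "p' = p" if "(\<forall>x\<in>A. prefix p' x) \<and> (\<forall>q. (\<forall>x\<in>A. prefix q x) \<longrightarrow> prefix q p')" for p'
    using that common longest by (blast intro: prefix_order.antisym)
qed

lemma suff_append: "m \<le> length v \<Longrightarrow> suff m (u @ v) = suff m v"
  by (simp add: suff_def)

lemma suff_Suc_0: "suff (Suc 0) u = (if u = [] then [None] else [Some (last u)])"
  by (cases u rule: rev_cases) (auto simp: suff_def)

lemma suff_Suc_0_eq_Nil_iff: "suff (Suc 0) u = suff (Suc 0) v \<Longrightarrow> u = [] \<longleftrightarrow> v = []"
  by (auto simp: suff_Suc_0 split: if_splits)

lemma suff_Suc_0_last_Cons: "suff (Suc 0) u = suff (Suc 0) v \<Longrightarrow> last (c # u) = last (c # v)"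
  by (auto simp: suff_Suc_0 split: if_splits)

lemma is_tier_filter: "is_tier A (filter P)"
  by (simp add: is_tier_def)

lemma tier_append:
  "is_tier A ups \<Longrightarrow> u \<in> lists A \<Longrightarrow> v \<in> lists A \<Longrightarrow> ups (u @ v) = ups u @ ups v"
  by (simp add: is_tier_def)

lemma tier_replicate:
  assumes tier: "is_tier A ups" and "a \<in> A" and keep: "ups [a] = [a]"
  shows "ups (replicate n a) = replicate n a"
proof (induction n)
  case 0
  then show ?case using tier by (simp add: is_tier_def)
next
  case (Suc n)
  have "ups ([a] @ replicate n a) = ups [a] @ ups (replicate n a)"
    using tier \<open>a \<in> A\<close> by (intro tier_append) auto
  then show ?case using Suc keep by simp
qed

lemma run_eq_map_if_fl_hom:
  assumes fl: "\<And>w. fl Sig f w = h w" and hom: "\<And>u v. h (u @ v) = h u @ h v"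
    and "w \<noteq> []"
  shows "run Sig f w = map (\<lambda>a. (Some a, h [a])) w"
proof -
  have "run_rev Sig f rw = map (\<lambda>a. (Some a, h [a])) (rev rw)" if "rw \<noteq> []" for rw
    using that by (induction rw) (auto simp: fl hom)
  then show ?thesis using \<open>w \<noteq> []\<close> by (simp add: run_def)
qed

lemma not_TSSLI:
  assumes "x \<in> lists Sig" "y \<in> lists Sig"
    and "suff (k - 1) (ups (run Sig f x)) = suff (k - 1) (ups (run Sig f y))"
    and "fr Sig f x [] \<noteq> fr Sig f y []"
  shows "\<not> TSSL Sig f k ups"
  using assms unfolding TSSL_def by blast

definition ex_Sig :: "nat set" where
  "ex_Sig = {0, 1, 2}"

definition ex_Gam :: "nat set" where
  "ex_Gam = {3, 4, 5, 6, 7, 8}"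

definition ex_code :: "nat list \<Rightarrow> nat list" where
  "ex_code w = concat (map (\<lambda>a. if a = 1 then [3] else if a = 2 then [4] else []) w)"

definition ex_f :: "nat list \<Rightarrow> nat list" where
  "ex_f w = ex_code w @ [5, if 0 \<in> set w then 6 else 7, last (8 # ex_code w)]"

definition ex_tier :: "nat list \<Rightarrow> nat list" where
  "ex_tier = filter (\<lambda>s. s \<in> {0, 3, 4})"

lemma ex_code_append [simp]: "ex_code (u @ v) = ex_code u @ ex_code v"
  by (simp add: ex_code_def)

lemma ex_code_simps [simp]:
  "ex_code [] = []" "ex_code (0 # w) = ex_code w"
  "ex_code [Suc 0] = [3]" "ex_code [2] = [4]"
  by (simp_all add: ex_code_def)

lemma set_ex_code: "set (ex_code w) \<subseteq> {3, 4}"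
  by (induction w) (auto simp: ex_code_def)

lemma ex_f_in_lists: "ex_f w \<in> lists ex_Gam"
  using set_ex_code[of w] last_in_set[of "8 # ex_code w"]
  by (auto simp: ex_f_def ex_Gam_def)

lemma fl_ex_f: "fl ex_Sig ex_f w = ex_code w"
  unfolding fl_def
proof (rule lcp_eqI)
  show "ex_code w @ 5 # [if 0 \<in> set w then 6 else 7, last (8 # ex_code w)]
      \<in> {ex_f (w @ y) |y. y \<in> lists ex_Sig}"
    by (rule CollectI, rule exI[of _ "[]"]) (simp add: ex_f_def)
  show "ex_code w @ 3 # [5, if 0 \<in> set (w @ [1]) then 6 else 7, 3]
      \<in> {ex_f (w @ y) |y. y \<in> lists ex_Sig}"
    by (rule CollectI, rule exI[of _ "[1]"]) (simp add: ex_f_def ex_Sig_def)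
qed (auto simp: ex_f_def)

lemma fr_ex_f:
  "fr ex_Sig ex_f w y = ex_code y @ [5, if 0 \<in> set (w @ y) then 6 else 7, last (8 # ex_code (w @ y))]"
  by (simp add: fr_def fl_ex_f ex_f_def)

lemma ex_tier_eq_Nil_iff: "w \<in> lists ex_Sig \<Longrightarrow> ex_tier w = [] \<longleftrightarrow> 0 \<notin> set w"
  by (auto simp: ex_tier_def ex_Sig_def filter_empty_conv)

lemma ex_tier_ex_code: "ex_tier (ex_code w) = ex_code w"
  using set_ex_code[of w] by (auto simp: ex_tier_def filter_id_conv)

lemma TIOSL_ex_f: "TIOSL ex_Sig ex_f 2 2 ex_tier"
  unfolding TIOSL_def numeral_2_eq_2 diff_Suc_1 fl_ex_f ex_tier_ex_code
proof (intro ballI impI)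
  fix w x y
  assume w: "w \<in> lists ex_Sig" and x: "x \<in> lists ex_Sig"
    and suffs: "suff (Suc 0) (ex_tier w) = suff (Suc 0) (ex_tier x) \<and>
      suff (Suc 0) (ex_code w) = suff (Suc 0) (ex_code x)"
  have "ex_tier w = [] \<longleftrightarrow> ex_tier x = []"
    using suffs by (intro suff_Suc_0_eq_Nil_iff) blast
  then have "0 \<in> set w \<longleftrightarrow> 0 \<in> set x"
    using ex_tier_eq_Nil_iff[OF w] ex_tier_eq_Nil_iff[OF x] by simp
  moreover have "last (8 # ex_code w) = last (8 # ex_code x)"
    using suffs by (intro suff_Suc_0_last_Cons) blast
  then have "last (8 # ex_code (w @ y)) = last (8 # ex_code (x @ y))"
    by (simp only: ex_code_append last_append flip: append_Cons)
  ultimately show "fr ex_Sig ex_f w y = fr ex_Sig ex_f x y"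
    by (simp only: fr_ex_f set_append Un_iff)
qed

definition ex_action :: "nat \<Rightarrow> nat option \<times> nat list" where
  "ex_action a = (Some a, ex_code [a])"

lemma run_ex_f: "w \<noteq> [] \<Longrightarrow> run ex_Sig ex_f w = map ex_action w"
  using run_eq_map_if_fl_hom[OF fl_ex_f ex_code_append]
  by (simp add: ex_action_def[abs_def])

lemma ex_action_in_run_alphabet: "a \<in> ex_Sig \<Longrightarrow> ex_action a \<in> run_alphabet ex_Sig ex_Gam"
  by (auto simp: ex_action_def run_alphabet_def ex_Sig_def ex_Gam_def)

lemma not_TSSL_if_tier_keeps:
  assumes "k > 0" and tier: "is_tier (run_alphabet ex_Sig ex_Gam) ups"
    and keep: "ups [ex_action 1] = [ex_action 1]"
  shows "\<not> TSSL ex_Sig ex_f k ups"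
proof (rule not_TSSLI)
  let ?ones = "replicate k (ex_action 1)"
  have zero: "ex_action 0 \<in> run_alphabet ex_Sig ex_Gam"
    and one: "ex_action 1 \<in> run_alphabet ex_Sig ex_Gam"
    by (rule ex_action_in_run_alphabet, simp add: ex_Sig_def)+
  have ups_ones: "ups ?ones = ?ones"
    by (rule tier_replicate[OF tier one keep])
  have "ups (run ex_Sig ex_f (0 # replicate k 1)) = ups ([ex_action 0] @ ?ones)"
    by (simp add: run_ex_f)
  also have "\<dots> = ups [ex_action 0] @ ?ones"
    using tier_append[OF tier, of "[ex_action 0]" ?ones] zero one ups_ones
    by (simp add: in_lists_conv_set)
  finally show "suff (k - 1) (ups (run ex_Sig ex_f (0 # replicate k 1)))
      = suff (k - 1) (ups (run ex_Sig ex_f (replicate k 1)))"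
    using \<open>k > 0\<close> ups_ones by (simp add: run_ex_f suff_append)
  show "fr ex_Sig ex_f (0 # replicate k 1) [] \<noteq> fr ex_Sig ex_f (replicate k 1) []"
    using \<open>k > 0\<close> by (simp add: fr_ex_f)
qed (auto simp: ex_Sig_def)

lemma not_TSSL_if_tier_erases:
  assumes tier: "is_tier (run_alphabet ex_Sig ex_Gam) ups"
    and erase: "ups [ex_action 1] = []"
  shows "\<not> TSSL ex_Sig ex_f k ups"
proof (rule not_TSSLI)
  have one: "ex_action 1 \<in> run_alphabet ex_Sig ex_Gam"
    and two: "ex_action 2 \<in> run_alphabet ex_Sig ex_Gam"
    by (rule ex_action_in_run_alphabet, simp add: ex_Sig_def)+
  have "ups (run ex_Sig ex_f [2, 1]) = ups ([ex_action 2] @ [ex_action 1])"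
    by (simp add: run_ex_f)
  also have "\<dots> = ups [ex_action 2]"
    using tier_append[OF tier, of "[ex_action 2]" "[ex_action 1]"] one two erase by simp
  also have "\<dots> = ups (run ex_Sig ex_f [2])"
    by (simp add: run_ex_f)
  finally show "suff (k - 1) (ups (run ex_Sig ex_f [2, 1]))
      = suff (k - 1) (ups (run ex_Sig ex_f [2]))"
    by simp
  show "fr ex_Sig ex_f [2, 1] [] \<noteq> fr ex_Sig ex_f [2] []"
    by (simp add: fr_ex_f ex_code_def)
qed (auto simp: ex_Sig_def)

theorem proposition18:
  shows "\<exists>(Sig :: nat set) (Gam :: nat set) (f :: nat list \<Rightarrow> nat list) (i :: nat) (j :: nat) tau.
     finite Sig \<and> finite Gam \<and> (\<forall>x\<in>lists Sig. f x \<in> lists Gam) \<and>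
     i > 0 \<and> j > 0 \<and> is_tier (Sig \<union> Gam) tau \<and> TIOSL Sig f i j tau \<and>
     (\<forall>k > 0. \<forall>ups. is_tier (run_alphabet Sig Gam) ups \<longrightarrow> \<not> TSSL Sig f k ups)"
proof (intro exI conjI allI impI)
  show "finite ex_Sig" "finite ex_Gam"
    by (simp_all add: ex_Sig_def ex_Gam_def)
  show "\<forall>x\<in>lists ex_Sig. ex_f x \<in> lists ex_Gam"
    using ex_f_in_lists by blast
  show "is_tier (ex_Sig \<union> ex_Gam) ex_tier"
    unfolding ex_tier_def by (rule is_tier_filter)
  show "TIOSL ex_Sig ex_f 2 2 ex_tier"
    by (rule TIOSL_ex_f)
  show "\<not> TSSL ex_Sig ex_f k ups"
    if "k > 0" and "is_tier (run_alphabet ex_Sig ex_Gam) ups" for k ups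
  proof -
    have "ex_action 1 \<in> run_alphabet ex_Sig ex_Gam"
      by (rule ex_action_in_run_alphabet) (simp add: ex_Sig_def)
    then have "ups [ex_action 1] = [ex_action 1] \<or> ups [ex_action 1] = []"
      using that(2) by (simp add: is_tier_def)
    then show ?thesis
      using not_TSSL_if_tier_keeps not_TSSL_if_tier_erases that by blast
  qed
qed simp_all

end
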